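(* Let $T$ be a finite rooted tree with root $\omega$ having $k\ge 1$ children. Partition the $k$ subtrees rooted at the children of $\omega$ into classes of pairwise isomorphic (rooted) subtrees; let $t$ be the number of classes, $k_i$ the number of subtrees in the $i$-th class, $T_i$ a representative of the $i$-th class, and $A_i$ the automorphism group of the rooted tree $T_i$ ($1\le i\le t$). If a finite group $G$ is representable on $T$, then there exists $1\le i\le t$ and a nontrivial homomorphism from $G$ to $W_{k_i}(A_i)$.
   Context: The automorphism group of a rooted tree is the group of tree automorphisms fixing the root; $G$ is representable on a rooted tree if there is a nontrivial homomorphism from $G$ to its automorphism group. For a group $A$ and $n\ge1$, $W_n(A)$ is the wreath product $S_n\wr A$, i.e. the semidirect product $A^n\rtimes S_n$ in which $S_n$ acts on the direct product $A^n$ by permuting coordinates. *)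

theory Defs
  imports "HOL-Algebra.Algebra" "HOL-Combinatorics.Permutations"
begin

text \<open>A finite rooted tree is given by a finite vertex set V, a root r \<in> V and a
parent map p (only relevant on V - {r}); every vertex reaches the root by
iterating p.  The edges are the pairs {v, p v} for v \<in> V - {r}.\<close>

definition rooted_tree :: "'v set \<Rightarrow> 'v \<Rightarrow> ('v \<Rightarrow> 'v) \<Rightarrow> bool" where
  "rooted_tree V r p \<longleftrightarrow> finite V \<and> r \<in> V \<and> (\<forall>v\<in>V - {r}. p v \<in> V)
     \<and> (\<forall>v\<in>V. \<exists>n. (p ^^ n) v = r)"

definition children :: "'v set \<Rightarrow> 'v \<Rightarrow> ('v \<Rightarrow> 'v) \<Rightarrow> 'v \<Rightarrow> 'v set" where
  "children V r p u = {v \<in> V - {r}. p v = u}"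

definition descendants :: "'v set \<Rightarrow> 'v \<Rightarrow> ('v \<Rightarrow> 'v) \<Rightarrow> 'v \<Rightarrow> 'v set" where
  "descendants V r p c = {v \<in> V. \<exists>n. (p ^^ n) v = c \<and> (\<forall>m<n. (p ^^ m) v \<noteq> r)}"

definition rtree_iso ::
  "'v set \<Rightarrow> 'v \<Rightarrow> ('v \<Rightarrow> 'v) \<Rightarrow> 'w set \<Rightarrow> 'w \<Rightarrow> ('w \<Rightarrow> 'w) \<Rightarrow> bool" where
  "rtree_iso V r p V' r' p' \<longleftrightarrow>
     (\<exists>f. bij_betw f V V' \<and> f r = r' \<and> (\<forall>v\<in>V - {r}. f (p v) = p' (f v)))"

definition tree_auts :: "'v set \<Rightarrow> 'v \<Rightarrow> ('v \<Rightarrow> 'v) \<Rightarrow> ('v \<Rightarrow> 'v) set" where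
  "tree_auts V r p = {f \<in> Bij V. f r = r \<and> (\<forall>v\<in>V - {r}. f (p v) = p (f v))}"

definition aut_group :: "'v set \<Rightarrow> 'v \<Rightarrow> ('v \<Rightarrow> 'v) \<Rightarrow> ('v \<Rightarrow> 'v) monoid" where
  "aut_group V r p = (BijGroup V) \<lparr>carrier := tree_auts V r p\<rparr>"

definition nontrivial_hom :: "('a, 'c) monoid_scheme \<Rightarrow> ('b, 'd) monoid_scheme \<Rightarrow> ('a \<Rightarrow> 'b) \<Rightarrow> bool" where
  "nontrivial_hom G H h \<longleftrightarrow> h \<in> hom G H \<and> (\<exists>g\<in>carrier G. h g \<noteq> monoid.one H)"

definition representable :: "('a, 'c) monoid_scheme \<Rightarrow> 'v set \<Rightarrow> 'v \<Rightarrow> ('v \<Rightarrow> 'v) \<Rightarrow> bool" where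
  "representable G V r p \<longleftrightarrow> (\<exists>h. nontrivial_hom G (aut_group V r p) h)"

text \<open>Wreath product W_n(A) = A^n \<rtimes> S_n, coordinates indexed by {..<n};
(a,\<sigma>)(b,\<tau>) = (a \<cdot> \<sigma>(b), \<sigma>\<tau>) with \<sigma>(b)_i = b_{\<sigma>^{-1} i}.\<close>

definition wreath :: "nat \<Rightarrow> ('a, 'c) monoid_scheme \<Rightarrow> ((nat \<Rightarrow> 'a) \<times> (nat \<Rightarrow> nat)) monoid" where
  "wreath n A =
    \<lparr>carrier = {(a, \<sigma>). a \<in> {..<n} \<rightarrow>\<^sub>E carrier A \<and> \<sigma> permutes {..<n}},
     monoid.mult = (\<lambda>(a, \<sigma>) (b, \<tau>). (\<lambda>i\<in>{..<n}. monoid.mult A (a i) (b (inv_into UNIV \<sigma> i)), \<sigma> \<circ> \<tau>)),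
     monoid.one = (\<lambda>i\<in>{..<n}. monoid.one A, id)\<rparr>"

end

theory Submission
  imports Defs
begin

text \<open>An automorphism \<open>\<phi>\<close> of \<open>T\<close> fixes the root, so it permutes the children of the root and
  maps the subtree \<open>T\<^sub>d\<close> below a child \<open>d\<close> isomorphically onto \<open>T\<^bsub>\<phi> d\<^esub>\<close>; in particular it
  permutes each isomorphism class of these subtrees. Fix a child \<open>c\<close> and identify every subtree
  in the class of \<open>T\<^sub>c\<close> with \<open>T\<^sub>c\<close>. Read through these identifications, \<open>\<phi>|\<^bsub>T\<^sub>d\<^esub>\<close> becomes an
  automorphism of \<open>T\<^sub>c\<close>, and these transported automorphisms satisfy a cocycle identity.
  Together with the permutation of the class this gives a homomorphism \<open>Aut T \<rightarrow> W\<^sub>k(Aut T\<^sub>c)\<close>.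
  If \<open>h : G \<rightarrow> Aut T\<close> is nontrivial, some \<open>h g\<close> moves a vertex below some child \<open>c\<close>, and then
  the image of \<open>h g\<close> in the wreath product belonging to the class of \<open>c\<close> is nontrivial.\<close>

definition is_rtree_iso ::
  "('v \<Rightarrow> 'w) \<Rightarrow> 'v set \<Rightarrow> 'v \<Rightarrow> ('v \<Rightarrow> 'v) \<Rightarrow> 'w set \<Rightarrow> 'w \<Rightarrow> ('w \<Rightarrow> 'w) \<Rightarrow> bool" where
  "is_rtree_iso f V r p V' r' p' \<longleftrightarrow>
     bij_betw f V V' \<and> f r = r' \<and> (\<forall>v\<in>V - {r}. f (p v) = p' (f v))"

lemma rtree_iso_iff_ex: "rtree_iso V r p V' r' p' \<longleftrightarrow> (\<exists>f. is_rtree_iso f V r p V' r' p')"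
  by (simp add: rtree_iso_def is_rtree_iso_def)

lemma tree_auts_iff:
  "\<phi> \<in> tree_auts V r p \<longleftrightarrow> \<phi> \<in> extensional V \<and> is_rtree_iso \<phi> V r p V r p"
  by (auto simp: tree_auts_def is_rtree_iso_def Bij_def)

lemma rooted_tree_parent_in:
  "rooted_tree V r p \<Longrightarrow> v \<in> V \<Longrightarrow> v \<noteq> r \<Longrightarrow> p v \<in> V"
  by (simp add: rooted_tree_def)

lemma is_rtree_iso_comp:
  assumes f: "is_rtree_iso f U a p V b q" and g: "is_rtree_iso g V b q W c s" and "a \<in> U"
  shows "is_rtree_iso (g \<circ> f) U a p W c s"
proof -
  have "f v \<in> V - {b}" if "v \<in> U - {a}" for v
    using f that \<open>a \<in> U\<close> unfolding is_rtree_iso_def bij_betw_def inj_on_def by auto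
  then show ?thesis using f g bij_betw_trans unfolding is_rtree_iso_def by fastforce
qed

lemma is_rtree_iso_inv:
  assumes f: "is_rtree_iso f U a p V b q" and T: "rooted_tree U a p"
  shows "is_rtree_iso (inv_into U f) V b q U a p"
proof -
  have bij: "bij_betw f U V" and fa: "f a = b" and comm: "\<forall>v\<in>U - {a}. f (p v) = q (f v)"
    using f by (auto simp: is_rtree_iso_def)
  have aU: "a \<in> U" using T by (simp add: rooted_tree_def)
  have "inv_into U f (q w) = p (inv_into U f w)" if w: "w \<in> V - {b}" for w
  proof -
    define u where "u = inv_into U f w"
    have u: "u \<in> U" "f u = w" using bij w unfolding u_def
      by (auto simp: bij_betw_def inv_into_into f_inv_into_f)
    with w fa have "u \<noteq> a" by auto
    with u comm T have "f (p u) = q w" "p u \<in> U" by (auto simp: rooted_tree_parent_in)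
    then show ?thesis using bij unfolding u_def by (metis bij_betw_inv_into_left)
  qed
  moreover have "inv_into U f b = a" using bij fa aU by (metis bij_betw_inv_into_left)
  ultimately show ?thesis using bij_betw_inv_into[OF bij] by (simp add: is_rtree_iso_def)
qed

lemma rtree_iso_sym:
  "rtree_iso U a p V b q \<Longrightarrow> rooted_tree U a p \<Longrightarrow> rtree_iso V b q U a p"
  using is_rtree_iso_inv by (metis rtree_iso_iff_ex)

lemma rtree_iso_trans:
  "rtree_iso U a p V b q \<Longrightarrow> rtree_iso V b q W c s \<Longrightarrow> a \<in> U \<Longrightarrow> rtree_iso U a p W c s"
  using is_rtree_iso_comp by (metis rtree_iso_iff_ex)

lemma restrict_in_tree_auts:
  assumes f: "is_rtree_iso f V r p V r p" and T: "rooted_tree V r p"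
  shows "restrict f V \<in> tree_auts V r p"
proof -
  have "r \<in> V" using T by (simp add: rooted_tree_def)
  then show ?thesis using f rooted_tree_parent_in[OF T]
    by (auto simp: tree_auts_iff is_rtree_iso_def bij_betw_def inj_on_def)
qed

lemma funpow_parent_in:
  assumes T: "rooted_tree V r p" and v: "v \<in> V" and "\<forall>k<m. (p ^^ k) v \<noteq> r"
  shows "(p ^^ m) v \<in> V"
  using assms(3)
proof (induction m)
  case (Suc m)
  then show ?case using rooted_tree_parent_in[OF T] by auto
qed (use v in simp)

lemma rooted_tree_descendants:
  assumes T: "rooted_tree V r p" and d: "d \<in> V"
  shows "rooted_tree (descendants V r p d) d p"
proof -
  have "p u \<in> descendants V r p d" if u: "u \<in> descendants V r p d" "u \<noteq> d" for u
  proof -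
    obtain k where k: "(p ^^ k) u = d" "\<forall>m<k. (p ^^ m) u \<noteq> r" "u \<in> V"
      using u by (auto simp: descendants_def)
    then obtain k' where k': "k = Suc k'" using u by (cases k) auto
    with k have "u \<noteq> r" by auto
    with k k' T show ?thesis
      by (auto simp: descendants_def rooted_tree_parent_in funpow_Suc_right simp del: funpow.simps
          intro!: exI[of _ k'])
  qed
  moreover have "d \<in> descendants V r p d" using d by (auto simp: descendants_def intro!: exI[of _ 0])
  moreover have "finite (descendants V r p d)"
    using T by (auto simp: rooted_tree_def descendants_def)
  ultimately show ?thesis by (auto simp: rooted_tree_def descendants_def)
qed

lemma tree_aut_root_iff:
  assumes T: "rooted_tree V r p" and phi: "\<phi> \<in> tree_auts V r p" and v: "v \<in> V"
  shows "\<phi> v = r \<longleftrightarrow> v = r"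
  using phi T v by (auto simp: tree_auts_iff is_rtree_iso_def rooted_tree_def bij_betw_def inj_on_def)

lemma tree_aut_funpow_parent:
  assumes T: "rooted_tree V r p" and phi: "\<phi> \<in> tree_auts V r p" and v: "v \<in> V"
    and "\<forall>k<m. (p ^^ k) v \<noteq> r"
  shows "(p ^^ m) (\<phi> v) = \<phi> ((p ^^ m) v)"
  using assms(4)
proof (induction m)
  case (Suc m)
  then have "(p ^^ m) v \<in> V - {r}" using funpow_parent_in[OF T v] by auto
  with Suc phi show ?case by (auto simp: tree_auts_iff is_rtree_iso_def)
qed simp

lemma tree_aut_descendants_iff:
  assumes T: "rooted_tree V r p" and phi: "\<phi> \<in> tree_auts V r p" and v: "v \<in> V" and d: "d \<in> V"
  shows "\<phi> v \<in> descendants V r p (\<phi> d) \<longleftrightarrow> v \<in> descendants V r p d"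
proof -
  have bij: "bij_betw \<phi> V V" using phi by (simp add: tree_auts_iff is_rtree_iso_def)
  have avoid: "(\<forall>k<m. (p ^^ k) (\<phi> v) \<noteq> r) \<longleftrightarrow> (\<forall>k<m. (p ^^ k) v \<noteq> r)" for m
  proof (induction m)
    case (Suc m)
    have "(p ^^ m) (\<phi> v) \<noteq> r \<longleftrightarrow> (p ^^ m) v \<noteq> r" if "\<forall>k<m. (p ^^ k) v \<noteq> r"
      using that tree_aut_funpow_parent[OF T phi v] tree_aut_root_iff[OF T phi]
        funpow_parent_in[OF T v] by simp
    with Suc show ?case by (auto simp: less_Suc_eq)
  qed simp
  have "(p ^^ m) (\<phi> v) = \<phi> d \<longleftrightarrow> (p ^^ m) v = d" if "\<forall>k<m. (p ^^ k) v \<noteq> r" for m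
    using that tree_aut_funpow_parent[OF T phi v] funpow_parent_in[OF T v] bij d
    by (auto simp: bij_betw_def inj_on_def)
  then show ?thesis using v bij avoid by (auto simp: descendants_def bij_betw_apply)
qed

lemma tree_aut_image_descendants:
  assumes T: "rooted_tree V r p" and phi: "\<phi> \<in> tree_auts V r p" and d: "d \<in> V"
  shows "\<phi> ` descendants V r p d = descendants V r p (\<phi> d)"
proof -
  have bij: "bij_betw \<phi> V V" using phi by (simp add: tree_auts_iff is_rtree_iso_def)
  have "w \<in> \<phi> ` descendants V r p d" if w: "w \<in> descendants V r p (\<phi> d)" for w
  proof -
    obtain u where "u \<in> V" "w = \<phi> u"
      using w bij by (auto simp: descendants_def bij_betw_def)
    with w show ?thesis using tree_aut_descendants_iff[OF T phi _ d] by auto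
  qed
  moreover have "descendants V r p d \<subseteq> V" by (auto simp: descendants_def)
  ultimately show ?thesis using tree_aut_descendants_iff[OF T phi _ d] by auto
qed

lemma tree_aut_child:
  assumes T: "rooted_tree V r p" and phi: "\<phi> \<in> tree_auts V r p" and d: "d \<in> children V r p r"
  shows "\<phi> d \<in> children V r p r"
  using phi d tree_aut_root_iff[OF T phi, of d]
  by (auto simp: children_def tree_auts_iff is_rtree_iso_def bij_betw_apply)

lemma tree_aut_is_rtree_iso_descendants:
  assumes T: "rooted_tree V r p" and phi: "\<phi> \<in> tree_auts V r p" and d: "d \<in> V"
  shows "is_rtree_iso \<phi> (descendants V r p d) d p (descendants V r p (\<phi> d)) (\<phi> d) p"
proof -
  have sub: "descendants V r p d \<subseteq> V" by (auto simp: descendants_def)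
  have "inj_on \<phi> (descendants V r p d)"
    using phi sub by (auto simp: tree_auts_iff is_rtree_iso_def bij_betw_def intro: inj_on_subset)
  moreover have "descendants V r p d - {d} \<subseteq> V - {r}"
    by (auto simp: descendants_def) (metis funpow_0 not_gr_zero)
  ultimately show ?thesis using tree_aut_image_descendants[OF T phi d] phi sub
    by (auto simp: is_rtree_iso_def bij_betw_def tree_auts_iff)
qed

lemma tree_aut_preserves_iso_class:
  assumes T: "rooted_tree V r p" and phi: "\<phi> \<in> tree_auts V r p" and d: "d \<in> V"
    and iso: "rtree_iso (descendants V r p d) d p W c q"
  shows "rtree_iso (descendants V r p (\<phi> d)) (\<phi> d) p W c q"
proof -
  have "\<phi> d \<in> V" using phi d by (auto simp: tree_auts_iff is_rtree_iso_def bij_betw_apply)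
  have "rtree_iso (descendants V r p (\<phi> d)) (\<phi> d) p (descendants V r p d) d p"
    using tree_aut_is_rtree_iso_descendants[OF T phi d] rooted_tree_descendants[OF T d]
    by (meson rtree_iso_iff_ex rtree_iso_sym)
  with iso show ?thesis using \<open>\<phi> d \<in> V\<close> rooted_tree_descendants[OF T]
    by (meson rtree_iso_trans rooted_tree_def)
qed

lemma aut_group_mult:
  "\<phi> \<in> tree_auts V r p \<Longrightarrow> \<psi> \<in> tree_auts V r p \<Longrightarrow> \<phi> \<otimes>\<^bsub>aut_group V r p\<^esub> \<psi> = compose V \<phi> \<psi>"
  by (simp add: aut_group_def BijGroup_def tree_auts_def)

lemma aut_group_carrier: "carrier (aut_group V r p) = tree_auts V r p"
  by (simp add: aut_group_def BijGroup_def)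

lemma aut_group_one: "\<one>\<^bsub>aut_group V r p\<^esub> = (\<lambda>x\<in>V. x)"
  by (simp add: aut_group_def BijGroup_def)

lemma nonroot_in_descendants_of_child:
  assumes T: "rooted_tree V r p" and v: "v \<in> V" "v \<noteq> r"
  shows "\<exists>c\<in>children V r p r. v \<in> descendants V r p c"
proof -
  have ex: "\<exists>n. (p ^^ n) v = r" using T v by (auto simp: rooted_tree_def)
  define N where "N = (LEAST n. (p ^^ n) v = r)"
  have N: "(p ^^ N) v = r" unfolding N_def using LeastI_ex[OF ex] .
  have avoid: "\<forall>m<N. (p ^^ m) v \<noteq> r" unfolding N_def using not_less_Least by blast
  obtain M where M: "N = Suc M" using N v by (cases N) auto
  have "(p ^^ M) v \<in> children V r p r"
    using funpow_parent_in[OF T v(1), of M] avoid N M by (auto simp: children_def)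
  moreover have "v \<in> descendants V r p ((p ^^ M) v)"
    using v avoid M unfolding descendants_def by (blast intro: less_SucI)
  ultimately show ?thesis by blast
qed

definition index_perm :: "(nat \<Rightarrow> 'k) \<Rightarrow> nat \<Rightarrow> ('k \<Rightarrow> 'k) \<Rightarrow> nat \<Rightarrow> nat" where
  "index_perm e n f i = (if i < n then inv_into {..<n} e (f (e i)) else i)"

lemma index_perm:
  assumes e: "bij_betw e {..<n} K" and f: "f ` K \<subseteq> K" and i: "i < n"
  shows "index_perm e n f i < n" "e (index_perm e n f i) = f (e i)"
proof -
  have "f (e i) \<in> K" using e f i by (auto simp: bij_betw_apply)
  then show "index_perm e n f i < n" "e (index_perm e n f i) = f (e i)"
    using e i by (auto simp: index_perm_def bij_betw_inv_into_right
        intro: bij_betw_apply[OF bij_betw_inv_into[OF e], simplified])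
qed

lemma index_perm_permutes:
  assumes e: "bij_betw e {..<n} K" and f: "bij_betw f K K"
  shows "index_perm e n f permutes {..<n}"
proof (rule bij_imp_permutes)
  have "bij_betw (inv_into {..<n} e \<circ> f \<circ> e) {..<n} {..<n}"
    using bij_betw_trans[OF bij_betw_trans[OF e f] bij_betw_inv_into[OF e]] by (simp add: comp_assoc)
  then show "bij_betw (index_perm e n f) {..<n} {..<n}"
    by (rule bij_betw_cong[THEN iffD1, rotated]) (simp add: index_perm_def)
qed (simp add: index_perm_def)

lemma index_perm_comp:
  assumes e: "bij_betw e {..<n} K" and g: "g ` K \<subseteq> K" and h: "\<forall>k\<in>K. h k = f (g k)"
  shows "index_perm e n h = index_perm e n f \<circ> index_perm e n g"
proof
  fix i show "index_perm e n h i = (index_perm e n f \<circ> index_perm e n g) i"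
    using index_perm[OF e g] e h by (simp add: index_perm_def bij_betw_apply)
qed

text \<open>Coordinate \<open>i\<close> of \<open>to_wreath g\<close> is \<open>\<tau> g\<close> at the point that \<open>g\<close> moves to \<open>e i\<close>;
  with this convention the cocycle identity is exactly the multiplication rule of \<open>W\<^sub>n(A)\<close>.\<close>

locale wreath_cocycle =
  fixes H :: "('h, 'm) monoid_scheme" and A :: "('a, 'b) monoid_scheme"
    and K :: "'k set" and n :: nat and e :: "nat \<Rightarrow> 'k"
    and act :: "'h \<Rightarrow> 'k \<Rightarrow> 'k" and \<tau> :: "'h \<Rightarrow> 'k \<Rightarrow> 'a"
  assumes enum: "bij_betw e {..<n} K"
    and act_bij: "g \<in> carrier H \<Longrightarrow> bij_betw (act g) K K"
    and act_mult:
      "\<lbrakk>g \<in> carrier H; h \<in> carrier H; k \<in> K\<rbrakk> \<Longrightarrow> act (g \<otimes>\<^bsub>H\<^esub> h) k = act g (act h k)"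
    and cocycle_closed: "\<lbrakk>g \<in> carrier H; k \<in> K\<rbrakk> \<Longrightarrow> \<tau> g k \<in> carrier A"
    and cocycle:
      "\<lbrakk>g \<in> carrier H; h \<in> carrier H; k \<in> K\<rbrakk> \<Longrightarrow> \<tau> (g \<otimes>\<^bsub>H\<^esub> h) k = \<tau> g (act h k) \<otimes>\<^bsub>A\<^esub> \<tau> h k"
begin

definition perm :: "'h \<Rightarrow> nat \<Rightarrow> nat" where
  "perm g = index_perm e n (act g)"

definition to_wreath :: "'h \<Rightarrow> (nat \<Rightarrow> 'a) \<times> (nat \<Rightarrow> nat)" where
  "to_wreath g = ((\<lambda>i\<in>{..<n}. \<tau> g (e (inv_into UNIV (perm g) i))), perm g)"

lemma act_image: "g \<in> carrier H \<Longrightarrow> act g ` K \<subseteq> K"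
  using act_bij by (simp add: bij_betw_def)

lemma perm_permutes: "g \<in> carrier H \<Longrightarrow> perm g permutes {..<n}"
  unfolding perm_def using index_perm_permutes[OF enum act_bij] .

lemma perm_mult: "\<lbrakk>g \<in> carrier H; h \<in> carrier H\<rbrakk> \<Longrightarrow> perm (g \<otimes>\<^bsub>H\<^esub> h) = perm g \<circ> perm h"
  unfolding perm_def using index_perm_comp[OF enum act_image] act_mult by blast

lemma inv_perm:
  assumes g: "g \<in> carrier H" and i: "i < n"
  shows "inv_into UNIV (perm g) i < n" "act g (e (inv_into UNIV (perm g) i)) = e i"
proof -
  have "inv_into UNIV (perm g) permutes {..<n}" using permutes_inv[OF perm_permutes[OF g]] .
  then show j: "inv_into UNIV (perm g) i < n" using i permutes_in_image by fastforce
  have "perm g (inv_into UNIV (perm g) i) = i" using permutes_inverses(1)[OF perm_permutes[OF g]] .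
  then show "act g (e (inv_into UNIV (perm g) i)) = e i"
    using index_perm(2)[OF enum act_image[OF g] j] by (simp add: perm_def)
qed

lemma to_wreath_carrier: "g \<in> carrier H \<Longrightarrow> to_wreath g \<in> carrier (wreath n A)"
  using cocycle_closed enum perm_permutes inv_perm(1)
  by (auto simp: to_wreath_def wreath_def bij_betw_apply)

lemma to_wreath_mult:
  assumes g: "g \<in> carrier H" and h: "h \<in> carrier H"
  shows "to_wreath (g \<otimes>\<^bsub>H\<^esub> h) = to_wreath g \<otimes>\<^bsub>wreath n A\<^esub> to_wreath h"
proof -
  have inv_mult: "inv_into UNIV (perm (g \<otimes>\<^bsub>H\<^esub> h)) = inv_into UNIV (perm h) \<circ> inv_into UNIV (perm g)"
    using perm_mult[OF g h] o_inv_distrib permutes_bij perm_permutes g h by metis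
  have "\<tau> (g \<otimes>\<^bsub>H\<^esub> h) (e (inv_into UNIV (perm (g \<otimes>\<^bsub>H\<^esub> h)) i))
        = \<tau> g (e (inv_into UNIV (perm g) i)) \<otimes>\<^bsub>A\<^esub> \<tau> h (e (inv_into UNIV (perm h) (inv_into UNIV (perm g) i)))"
    if i: "i < n" for i
  proof -
    define j where "j = inv_into UNIV (perm g) i"
    have j: "j < n" "act g (e j) = e i" using inv_perm[OF g i] by (auto simp: j_def)
    define k where "k = inv_into UNIV (perm h) j"
    have k: "k < n" "act h (e k) = e j" using inv_perm[OF h j(1)] by (auto simp: k_def)
    show ?thesis using cocycle[OF g h, of "e k"] enum k
      by (simp add: inv_mult j_def[symmetric] k_def[symmetric] bij_betw_apply)
  qed
  then show ?thesis using inv_perm(1)[OF g]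
    by (auto simp: to_wreath_def wreath_def perm_mult[OF g h] intro!: restrict_ext)
qed

lemma to_wreath_hom: "to_wreath \<in> hom H (wreath n A)"
  by (auto intro: homI to_wreath_carrier to_wreath_mult)

lemma to_wreath_eq_one:
  assumes g: "g \<in> carrier H" and one: "to_wreath g = \<one>\<^bsub>wreath n A\<^esub>" and k: "k \<in> K"
  shows "act g k = k" "\<tau> g k = \<one>\<^bsub>A\<^esub>"
proof -
  obtain i where i: "i < n" "k = e i" using enum k by (auto simp: bij_betw_def)
  have "perm g = id" and coord: "\<tau> g (e (inv_into UNIV (perm g) i)) = \<one>\<^bsub>A\<^esub>"
    using one i(1) by (auto simp: to_wreath_def wreath_def dest: fun_cong[of _ _ i])
  then show "act g k = k" "\<tau> g k = \<one>\<^bsub>A\<^esub>"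
    using inv_perm[OF g i(1)] i(2) by (auto simp: inv_id)
qed

end

locale rooted_subtree_class =
  fixes V :: "'v set" and r :: 'v and p :: "'v \<Rightarrow> 'v" and c :: 'v
  assumes tree: "rooted_tree V r p" and child: "c \<in> children V r p r"
begin

abbreviation D :: "'v \<Rightarrow> 'v set" where
  "D \<equiv> descendants V r p"

definition iso_class :: "'v set" where
  "iso_class = {d \<in> children V r p r. rtree_iso (D d) d p (D c) c p}"

definition ident :: "'v \<Rightarrow> 'v \<Rightarrow> 'v" where
  "ident d = (SOME f. is_rtree_iso f (D d) d p (D c) c p)"

definition transport :: "('v \<Rightarrow> 'v) \<Rightarrow> 'v \<Rightarrow> 'v \<Rightarrow> 'v" where
  "transport \<phi> d = (\<lambda>x\<in>D c. ident (\<phi> d) (\<phi> (inv_into (D d) (ident d) x)))"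

lemma iso_class_sub_V: "iso_class \<subseteq> V"
  by (auto simp: iso_class_def children_def)

lemma rooted_subtree: "d \<in> iso_class \<Longrightarrow> rooted_tree (D d) d p"
  using rooted_tree_descendants[OF tree] iso_class_sub_V by blast

lemma rooted_subtree_c: "rooted_tree (D c) c p"
  using rooted_tree_descendants[OF tree] child by (auto simp: children_def)

lemma c_in_iso_class: "c \<in> iso_class"
  using child by (auto simp: iso_class_def rtree_iso_def intro!: exI[of _ id])

lemma ident_iso: "d \<in> iso_class \<Longrightarrow> is_rtree_iso (ident d) (D d) d p (D c) c p"
  using someI_ex[of "\<lambda>f. is_rtree_iso f (D d) d p (D c) c p"]
  by (auto simp: ident_def iso_class_def rtree_iso_iff_ex)

lemma ident_inv_ident: "d \<in> iso_class \<Longrightarrow> x \<in> D d \<Longrightarrow> inv_into (D d) (ident d) (ident d x) = x"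
  using ident_iso by (meson bij_betw_inv_into_left is_rtree_iso_def)

lemma tree_aut_iso_class:
  assumes phi: "\<phi> \<in> tree_auts V r p" and d: "d \<in> iso_class"
  shows "\<phi> d \<in> iso_class"
proof -
  have "d \<in> V" using d iso_class_sub_V by blast
  moreover have "d \<in> children V r p r" "rtree_iso (D d) d p (D c) c p"
    using d by (auto simp: iso_class_def)
  ultimately show ?thesis
    using tree_aut_child[OF tree phi] tree_aut_preserves_iso_class[OF tree phi]
    by (simp add: iso_class_def)
qed

lemma tree_aut_permutes_iso_class:
  assumes phi: "\<phi> \<in> tree_auts V r p"
  shows "bij_betw \<phi> iso_class iso_class"
proof -
  have "finite iso_class" using tree iso_class_sub_V finite_subset by (auto simp: rooted_tree_def)
  moreover have "inj_on \<phi> iso_class"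
    using phi iso_class_sub_V by (auto simp: tree_auts_iff is_rtree_iso_def bij_betw_def intro: inj_on_subset)
  moreover have "\<phi> ` iso_class \<subseteq> iso_class" using tree_aut_iso_class[OF phi] by blast
  ultimately show ?thesis using endo_inj_surj by (simp add: bij_betw_def)
qed

lemma transport_in_tree_auts:
  assumes phi: "\<phi> \<in> tree_auts V r p" and d: "d \<in> iso_class"
  shows "transport \<phi> d \<in> tree_auts (D c) c p"
proof -
  have dV: "d \<in> V" using d iso_class_sub_V by blast
  have cD: "c \<in> D c" using rooted_subtree_c by (simp add: rooted_tree_def)
  have "is_rtree_iso (inv_into (D d) (ident d)) (D c) c p (D d) d p"
    by (rule is_rtree_iso_inv[OF ident_iso[OF d] rooted_subtree[OF d]])
  then have "is_rtree_iso (\<phi> \<circ> inv_into (D d) (ident d)) (D c) c p (D (\<phi> d)) (\<phi> d) p"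
    by (rule is_rtree_iso_comp[OF _ tree_aut_is_rtree_iso_descendants[OF tree phi dV] cD])
  then have "is_rtree_iso (ident (\<phi> d) \<circ> (\<phi> \<circ> inv_into (D d) (ident d))) (D c) c p (D c) c p"
    by (rule is_rtree_iso_comp[OF _ ident_iso[OF tree_aut_iso_class[OF phi d]] cD])
  then show ?thesis
    using restrict_in_tree_auts[OF _ rooted_subtree_c] by (simp add: transport_def o_def)
qed

lemma transport_mult:
  assumes phi: "\<phi> \<in> tree_auts V r p" and psi: "\<psi> \<in> tree_auts V r p" and d: "d \<in> iso_class"
  shows "transport (compose V \<phi> \<psi>) d = compose (D c) (transport \<phi> (\<psi> d)) (transport \<psi> d)"
proof (rule ext)
  fix x
  show "transport (compose V \<phi> \<psi>) d x = compose (D c) (transport \<phi> (\<psi> d)) (transport \<psi> d) x"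
  proof (cases "x \<in> D c")
    case x: True
    define u where "u = inv_into (D d) (ident d) x"
    have u: "u \<in> D d" using ident_iso[OF d] x
      by (auto simp: u_def is_rtree_iso_def bij_betw_def inv_into_into)
    have dV: "d \<in> V" and uV: "u \<in> V" using u d iso_class_sub_V by (auto simp: descendants_def)
    have psi_d: "\<psi> d \<in> iso_class" using tree_aut_iso_class[OF psi d] .
    have psi_u: "\<psi> u \<in> D (\<psi> d)"
      using tree_aut_image_descendants[OF tree psi dV] u by auto
    have y: "transport \<psi> d x = ident (\<psi> d) (\<psi> u)"
      using x by (simp add: transport_def u_def)
    have yD: "ident (\<psi> d) (\<psi> u) \<in> D c"
      using ident_iso[OF psi_d] psi_u by (auto simp: is_rtree_iso_def bij_betw_apply)
    have "compose (D c) (transport \<phi> (\<psi> d)) (transport \<psi> d) x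
        = transport \<phi> (\<psi> d) (ident (\<psi> d) (\<psi> u))"
      by (simp only: compose_eq[OF x] y)
    also have "\<dots> = ident (\<phi> (\<psi> d)) (\<phi> (\<psi> u))"
      using yD by (simp add: transport_def ident_inv_ident[OF psi_d psi_u])
    also have "\<dots> = ident (compose V \<phi> \<psi> d) (compose V \<phi> \<psi> u)"
      using dV uV by (simp add: compose_eq)
    also have "\<dots> = transport (compose V \<phi> \<psi>) d x"
      using x by (simp add: transport_def u_def)
    finally show ?thesis ..
  qed (simp add: transport_def compose_def)
qed

lemma transport_trivial_fixes_subtree:
  assumes phi: "\<phi> \<in> tree_auts V r p" and d: "d \<in> iso_class"
    and fix_d: "\<phi> d = d" and triv: "transport \<phi> d = (\<lambda>x\<in>D c. x)" and v: "v \<in> D d"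
  shows "\<phi> v = v"
proof -
  have bij: "bij_betw (ident d) (D d) (D c)" using ident_iso[OF d] by (simp add: is_rtree_iso_def)
  have "d \<in> V" using d iso_class_sub_V by blast
  then have "\<phi> v \<in> D d"
    using tree_aut_image_descendants[OF tree phi] v by (metis fix_d imageI)
  have iv: "ident d v \<in> D c" using bij v by (rule bij_betw_apply)
  then have "transport \<phi> d (ident d v) = ident d (\<phi> v)"
    unfolding transport_def fix_d using ident_inv_ident[OF d v] by simp
  moreover have "transport \<phi> d (ident d v) = ident d v"
    using iv by (simp add: triv)
  ultimately have "ident d (\<phi> v) = ident d v" by simp
  with \<open>\<phi> v \<in> D d\<close> show ?thesis using bij v by (meson bij_betw_def inj_on_def)
qed

lemma wreath_cocycle_transport:
  assumes "bij_betw e {..<card iso_class} iso_class"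
  shows "wreath_cocycle (aut_group V r p) (aut_group (D c) c p) iso_class (card iso_class) e
           (\<lambda>\<phi>. \<phi>) transport"
proof (unfold_locales, unfold aut_group_carrier)
  fix \<phi> \<psi> d
  assume phi: "\<phi> \<in> tree_auts V r p" and psi: "\<psi> \<in> tree_auts V r p" and d: "d \<in> iso_class"
  have "d \<in> V" using d iso_class_sub_V by blast
  then show "(\<phi> \<otimes>\<^bsub>aut_group V r p\<^esub> \<psi>) d = \<phi> (\<psi> d)"
    by (simp add: aut_group_mult[OF phi psi] compose_eq)
  show "transport (\<phi> \<otimes>\<^bsub>aut_group V r p\<^esub> \<psi>) d
        = transport \<phi> (\<psi> d) \<otimes>\<^bsub>aut_group (D c) c p\<^esub> transport \<psi> d"
    using transport_mult[OF phi psi d] aut_group_mult[OF phi psi]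
      aut_group_mult[OF transport_in_tree_auts transport_in_tree_auts]
      tree_aut_iso_class[OF psi d] phi psi d by simp
qed (use assms tree_aut_permutes_iso_class transport_in_tree_auts in simp_all)

lemma hom_to_wreath_moving:
  assumes phi: "\<phi> \<in> tree_auts V r p" and v: "v \<in> D c" "\<phi> v \<noteq> v"
  shows "\<exists>\<Psi>. \<Psi> \<in> hom (aut_group V r p) (wreath (card iso_class) (aut_group (D c) c p))
           \<and> \<Psi> \<phi> \<noteq> \<one>\<^bsub>wreath (card iso_class) (aut_group (D c) c p)\<^esub>"
proof -
  have "finite iso_class" using tree iso_class_sub_V finite_subset by (auto simp: rooted_tree_def)
  then obtain e where "bij_betw e {..<card iso_class} iso_class"
    using ex_bij_betw_nat_finite by (metis atLeast0LessThan)
  then interpret W: wreath_cocycle "aut_group V r p" "aut_group (D c) c p" iso_class "card iso_class" e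
    "\<lambda>\<phi>. \<phi>" transport
    by (rule wreath_cocycle_transport)
  have "W.to_wreath \<phi> \<noteq> \<one>\<^bsub>wreath (card iso_class) (aut_group (D c) c p)\<^esub>"
    using W.to_wreath_eq_one[OF _ _ c_in_iso_class] transport_trivial_fixes_subtree[OF phi c_in_iso_class]
      phi v by (auto simp: aut_group_carrier aut_group_one)
  then show ?thesis using W.to_wreath_hom by blast
qed

end

lemma nontrivial_tree_aut_moves_vertex:
  assumes phi: "\<phi> \<in> tree_auts V r p" and "\<phi> \<noteq> \<one>\<^bsub>aut_group V r p\<^esub>"
  shows "\<exists>v\<in>V. \<phi> v \<noteq> v"
proof (rule ccontr)
  assume "\<not> (\<exists>v\<in>V. \<phi> v \<noteq> v)"
  moreover have "\<phi> \<in> extensional V" using phi by (simp add: tree_auts_iff)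
  ultimately have "\<phi> = (\<lambda>x\<in>V. x)" by (force simp: extensional_def)
  with assms(2) show False by (simp add: aut_group_one)
qed

theorem mainTheorem13:
  fixes G :: "('g, 'z) monoid_scheme" and V :: "'v set" and r :: 'v and p :: "'v \<Rightarrow> 'v"
  assumes "rooted_tree V r p"
    and "children V r p r \<noteq> {}"
    and "group G" and "finite (carrier G)"
    and "representable G V r p"
  shows "\<exists>c\<in>children V r p r. \<exists>h. nontrivial_hom G
           (wreath (card {c' \<in> children V r p r.
                        rtree_iso (descendants V r p c') c' p (descendants V r p c) c p})
                   (aut_group (descendants V r p c) c p)) h"
proof -
  obtain h g where h: "h \<in> hom G (aut_group V r p)" and g: "g \<in> carrier G"
    and moved: "h g \<noteq> \<one>\<^bsub>aut_group V r p\<^esub>"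
    using assms(5) unfolding representable_def nontrivial_hom_def by blast
  have hg: "h g \<in> tree_auts V r p" using h g by (auto simp: hom_def aut_group_carrier)
  obtain v where v: "v \<in> V" "h g v \<noteq> v"
    using nontrivial_tree_aut_moves_vertex[OF hg moved] by blast
  moreover have "h g r = r" using hg by (simp add: tree_auts_def)
  ultimately have "v \<noteq> r" by blast
  then obtain c where c: "c \<in> children V r p r" and vc: "v \<in> descendants V r p c"
    using nonroot_in_descendants_of_child[OF assms(1) v(1)] by blast
  interpret rooted_subtree_class V r p c using assms(1) c by unfold_locales
  obtain \<Psi> where \<Psi>: "\<Psi> \<in> hom (aut_group V r p) (wreath (card iso_class) (aut_group (D c) c p))"
    and nontriv: "\<Psi> (h g) \<noteq> \<one>\<^bsub>wreath (card iso_class) (aut_group (D c) c p)\<^esub>"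
    using hom_to_wreath_moving[OF hg vc v(2)] by blast
  have "nontrivial_hom G (wreath (card iso_class) (aut_group (D c) c p)) (\<Psi> \<circ> h)"
    using hom_compose[OF h \<Psi>] g nontriv unfolding nontrivial_hom_def by (metis comp_apply)
  then show ?thesis unfolding iso_class_def by (intro bexI[OF exI c])
qed

end
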